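(* Let $m\ge0$ and let $\chi_t^{(-1/2,-1/2,m)}$ be the averaged characteristic polynomial of the Jacobi eigenvalue process with $p=q=m-\tfrac12$ (so $r=s=-\tfrac12$) started from $(1,\dots,1)$, so that $\chi_0^{(-1/2,-1/2,m)}(x)=(x-1)^m$. Then for all $t\ge0$ and all $z\in\mathbb C\setminus\{0\}$, $$H_{2m}(z,2t)=4^mz^m\,\chi_t^{(-1/2,-1/2,m)}\Big(\frac{z+z^{-1}+2}{4}\Big),$$ where $H_d(z,t)=\sum_{k=0}^dz^{d-k}(-1)^k\binom dk\exp\big(-t\frac{k(d-k)}2\big)$ is the Hermite unitary polynomial.
   Context: The Jacobi eigenvalue process with parameters $p,q$ solves $d\lambda_t^i=\sqrt{2\lambda_t^i(1-\lambda_t^i)}dB_t^i+[p-(p+q)\lambda_t^i+\sum_{j\ne i}\frac{\lambda_t^i(1-\lambda_t^j)+\lambda_t^j(1-\lambda_t^i)}{\lambda_t^i-\lambda_t^j}]dt$, $1\le i\le m$, with independent Brownian motions, and $\chi_t^{(r,s,m)}(x)=\mathbb E\prod_{i=1}^m(x-\lambda_t^i)$ with $r=p-m$, $s=q-m$. Equivalently, $\chi_t^{(r,s,m)}$ is the solution of $\partial_t\chi=-\{x(1-x)\partial_x^2+[(r+1)-(r+s+2)x]\partial_x+m(r+s+m+1)\}\chi$ with the given initial polynomial. *)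

theory Defs
  imports "HOL-Analysis.Analysis" "HOL-Computational_Algebra.Polynomial"
begin

definition hermite_unitary :: "nat \<Rightarrow> complex \<Rightarrow> real \<Rightarrow> complex" where
  "hermite_unitary d z t =
     (\<Sum>k=0..d. z ^ (d - k) * (-1) ^ k * of_nat (d choose k)
                * complex_of_real (exp (- t * real (k * (d - k)) / 2)))"

definition jacobi_op :: "real \<Rightarrow> real \<Rightarrow> nat \<Rightarrow> real poly \<Rightarrow> real \<Rightarrow> real" where
  "jacobi_op r s m p x =
     x * (1 - x) * poly (pderiv (pderiv p)) x
     + ((r + 1) - (r + s + 2) * x) * poly (pderiv p) x
     + real m * (r + s + real m + 1) * poly p x"

text \<open>chi is the averaged characteristic polynomial chi^{(r,s,m)}_t with initial polynomial p0:
  the (polynomial, degree <= m) solution for t >= 0 of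
  d/dt chi_t = - L chi_t, chi_0 = p0.\<close>
definition is_jacobi_char_poly ::
  "real \<Rightarrow> real \<Rightarrow> nat \<Rightarrow> real poly \<Rightarrow> (real \<Rightarrow> real poly) \<Rightarrow> bool" where
  "is_jacobi_char_poly r s m p0 chi \<longleftrightarrow>
     chi 0 = p0 \<and>
     (\<forall>t\<ge>0. degree (chi t) \<le> m) \<and>
     (\<forall>t\<ge>0. \<forall>x. ((\<lambda>\<tau>. poly (chi \<tau>) x) has_real_derivative
                      - jacobi_op r s m (chi t) x) (at t within {0..}))"

end

theory Submission
  imports Defs
begin

(* Put x = w(z) = (z + 1/z + 2)/4, so that 4 z w(z) = (z + 1)^2 and 4 z (w(z) - 1) = (z - 1)^2.
   For deg p <= m, P(z) = 4^m z^m p(w(z)) is a polynomial of degree <= 2m, and a direct computation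
   with theta = z d/dz shows that the Jacobi operator L with r = s = -1/2 becomes theta (2m - theta):
   (theta (2m - theta) P)(z) = 4^m z^m (L p)(w(z)).  This operator multiplies z^a by a(2m - a), so the
   coefficients of P_t = 4^m z^m chi_t(w(z)) solve c_a' = -a(2m - a) c_a.  The initial value
   (x - 1)^m gives P_0 = (z - 1)^(2m), hence P_t(z) = H_2m(z, 2t).  Since the evolution equation is
   only given pointwise in x, it is transferred to coefficients by Lagrange interpolation. *)

lemma map_poly_of_real_add:
  "map_poly (of_real :: real \<Rightarrow> 'a::real_algebra_1) (p + q) = map_poly of_real p + map_poly of_real q"
  by (rule poly_eqI) (simp add: coeff_map_poly)

lemma map_poly_of_real_mult:
  "map_poly (of_real :: real \<Rightarrow> 'a::{real_algebra_1,comm_semiring_0}) (p * q)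
     = map_poly of_real p * map_poly of_real q"
  by (rule poly_eqI) (simp add: coeff_map_poly coeff_mult of_real_sum)

lemma map_poly_of_real_sum:
  "map_poly (of_real :: real \<Rightarrow> 'a::real_algebra_1) (\<Sum>k\<in>A. f k) = (\<Sum>k\<in>A. map_poly of_real (f k))"
  by (induction A rule: infinite_finite_induct) (simp_all add: map_poly_of_real_add)

lemma map_poly_of_real_power:
  "map_poly (of_real :: real \<Rightarrow> 'a::{real_algebra_1,comm_semiring_1}) (p ^ n) = map_poly of_real p ^ n"
  by (induction n) (simp_all add: map_poly_of_real_mult)

lemma poly_eq_sum_coeff:
  fixes p :: "'a::comm_semiring_1 poly"
  assumes "degree p \<le> n"
  shows "poly p x = (\<Sum>i\<le>n. coeff p i * x ^ i)"
  by (subst poly_as_sum_of_monoms'[OF assms, symmetric]) (simp add: poly_sum poly_monom)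

lemma poly_eqI_infinite:
  fixes p q :: "'a::idom poly"
  assumes "infinite A" "\<And>x. x \<in> A \<Longrightarrow> poly p x = poly q x"
  shows "p = q"
proof (rule ccontr)
  assume "p \<noteq> q"
  then have "finite {x. poly (p - q) x = 0}"
    by (intro poly_roots_finite) simp
  moreover have "A \<subseteq> {x. poly (p - q) x = 0}"
    using assms(2) by auto
  ultimately show False
    using assms(1) finite_subset by blast
qed

definition lagrange_basis :: "'a::field set \<Rightarrow> 'a \<Rightarrow> 'a poly" where
  "lagrange_basis A a = smult (inverse (\<Prod>b\<in>A - {a}. a - b)) (\<Prod>b\<in>A - {a}. [:- b, 1:])"

lemma poly_lagrange_basis:
  assumes "finite A" "a \<in> A" "x \<in> A"
  shows "poly (lagrange_basis A a) x = (if x = a then 1 else 0)"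
  using assms by (auto simp: lagrange_basis_def poly_prod prod_zero_iff)

lemma degree_lagrange_basis:
  assumes "finite A" "a \<in> A"
  shows "degree (lagrange_basis A a) < card A"
proof -
  have "degree (lagrange_basis A a) \<le> sum (degree \<circ> (\<lambda>b. [:- b, 1:])) (A - {a})"
    unfolding lagrange_basis_def
    by (rule order.trans[OF degree_smult_le degree_prod_sum_le]) (use assms in simp)
  also have "\<dots> = card A - 1"
    using assms by (simp add: card_Diff_singleton)
  also have "\<dots> < card A"
    using assms card_gt_0_iff by (metis diff_less empty_iff zero_less_one)
  finally show ?thesis .
qed

lemma lagrange_interpolation:
  fixes p :: "'a::field poly"
  assumes "finite A" "degree p < card A"
  shows "p = (\<Sum>a\<in>A. smult (poly p a) (lagrange_basis A a))"
proof (rule poly_eqI_degree[of A])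
  show "degree (\<Sum>a\<in>A. smult (poly p a) (lagrange_basis A a)) < card A"
    using assms by (intro degree_sum_less le_less_trans[OF degree_smult_le] degree_lagrange_basis) auto
  fix x assume "x \<in> A"
  then have "(\<Sum>a\<in>A. poly p a * poly (lagrange_basis A a) x) = poly p x"
    using assms by (simp add: poly_lagrange_basis if_distrib cong: if_cong)
  then show "poly p x = poly (\<Sum>a\<in>A. smult (poly p a) (lagrange_basis A a)) x"
    by (simp add: poly_sum)
qed (use assms in auto)

lemma DERIV_coeff_of_DERIV_poly:
  fixes P :: "'a::real_normed_field \<Rightarrow> 'a poly"
  assumes "finite A" and "s \<in> S" and "\<And>t. t \<in> S \<Longrightarrow> degree (P t) < card A"
    and "degree D < card A"
    and "\<And>x. x \<in> A \<Longrightarrow> ((\<lambda>t. poly (P t) x) has_field_derivative poly D x) (at s within S)"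
  shows "((\<lambda>t. coeff (P t) k) has_field_derivative coeff D k) (at s within S)"
proof -
  have coeff_eq: "coeff q k = (\<Sum>a\<in>A. poly q a * coeff (lagrange_basis A a) k)" if "degree q < card A" for q
    by (subst lagrange_interpolation[OF assms(1) that]) (simp add: coeff_sum)
  have "((\<lambda>t. \<Sum>a\<in>A. poly (P t) a * coeff (lagrange_basis A a) k) has_field_derivative
      (\<Sum>a\<in>A. poly D a * coeff (lagrange_basis A a) k)) (at s within S)"
    by (intro DERIV_sum DERIV_cmult_right assms(5))
  then have "((\<lambda>t. \<Sum>a\<in>A. poly (P t) a * coeff (lagrange_basis A a) k) has_field_derivative
      coeff D k) (at s within S)"
    by (simp only: coeff_eq[OF assms(4)])
  then show ?thesis
    by (rule has_field_derivative_transform_within[where d = 1]) (use assms coeff_eq in auto)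
qed

lemma linear_ode_solution_eq_exp:
  fixes g :: "real \<Rightarrow> real"
  assumes "\<And>t. t \<ge> 0 \<Longrightarrow> (g has_real_derivative - l * g t) (at t within {0..})" and "t \<ge> 0"
  shows "g t = g 0 * exp (- l * t)"
proof -
  have "\<exists>c. \<forall>x\<in>{0..}. g x * exp (l * x) = c"
  proof (rule has_field_derivative_zero_constant)
    fix x :: real assume "x \<in> {0..}"
    then have "((\<lambda>x. g x * exp (l * x)) has_real_derivative
        - l * g x * exp (l * x) + g x * (exp (l * x) * l)) (at x within {0..})"
      by (auto intro!: derivative_eq_intros assms(1))
    then show "((\<lambda>x. g x * exp (l * x)) has_real_derivative 0) (at x within {0..})"
      by (simp add: algebra_simps)
  qed auto
  then have "g t * exp (l * t) = g 0"
    using assms(2) by (metis atLeast_iff exp_zero mult.commute mult_1 mult_zero_right order_refl)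
  then show ?thesis
    by (metis exp_minus_inverse mult.assoc mult.right_neutral mult_minus_left)
qed

definition euler_op :: "'a::{comm_semiring_1,semiring_no_zero_divisors} poly \<Rightarrow> 'a poly" where
  "euler_op p = pCons 0 (pderiv p)"

lemma coeff_euler_op: "coeff (euler_op p) k = of_nat k * coeff p k"
  by (cases k) (simp_all add: euler_op_def coeff_pderiv)

lemma poly_euler_op: "poly (euler_op p) x = x * poly (pderiv p) x"
  by (simp add: euler_op_def)

lemma poly_euler_op_eq_real_derivative:
  fixes p :: "real poly"
  assumes "open S" "x \<in> S" "\<And>y. y \<in> S \<Longrightarrow> poly p y = f y" "(f has_real_derivative f') (at x)"
  shows "poly (euler_op p) x = x * f'"
proof -
  have "(poly p has_real_derivative f') (at x)"
    using has_field_derivative_transform_within_open[OF assms(4,1,2)] assms(3) by metis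
  then show ?thesis
    by (simp add: poly_euler_op DERIV_unique[OF poly_DERIV])
qed

definition unitary_heat_op :: "nat \<Rightarrow> 'a::idom poly \<Rightarrow> 'a poly" where
  "unitary_heat_op m p = smult (2 * of_nat m) (euler_op p) - euler_op (euler_op p)"

lemma coeff_unitary_heat_op:
  "coeff (unitary_heat_op m p) k = of_nat k * (2 * of_nat m - of_nat k) * coeff p k"
  by (simp add: unitary_heat_op_def coeff_euler_op algebra_simps)

lemma degree_unitary_heat_op: "degree (unitary_heat_op m p) \<le> degree p"
  by (rule degree_le) (simp add: coeff_unitary_heat_op coeff_eq_0)

lemma poly_euler_op_power_mult:
  fixes p :: "real poly"
  assumes "open S" "x \<in> S" "x \<noteq> 0" "\<And>y. y \<in> S \<Longrightarrow> poly p y = c * y ^ m * h y"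
    and "(h has_real_derivative h') (at x)"
  shows "poly (euler_op p) x = c * x ^ m * (m * h x + x * h')"
proof -
  have "((\<lambda>y. c * y ^ m * h y) has_real_derivative c * (m * x ^ (m - 1) * h x + x ^ m * h')) (at x)"
    by (auto intro!: derivative_eq_intros assms(5) simp: algebra_simps)
  moreover have "x * (c * (m * x ^ (m - 1) * h x + x ^ m * h')) = c * x ^ m * (m * h x + x * h')"
    by (cases m) (simp_all add: algebra_simps)
  ultimately show ?thesis
    using poly_euler_op_eq_real_derivative[OF assms(1,2,4)] by metis
qed

(* joukowski z = (J z + 1) / 2 for the Joukowsky map J z = (z + 1/z) / 2. *)
definition joukowski :: "'a::field \<Rightarrow> 'a" where
  "joukowski z = (z + inverse z + 2) / 4"

definition joukowski_skew :: "'a::field \<Rightarrow> 'a" where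
  "joukowski_skew z = (z - inverse z) / 4"

lemma DERIV_joukowski:
  "(x::real) \<noteq> 0 \<Longrightarrow> (joukowski has_real_derivative joukowski_skew x / x) (at x)"
  unfolding joukowski_def[abs_def]
  by (auto intro!: derivative_eq_intros simp: joukowski_skew_def field_simps power2_eq_square)

lemma DERIV_joukowski_skew:
  "(x::real) \<noteq> 0 \<Longrightarrow> (joukowski_skew has_real_derivative (joukowski x - 1/2) / x) (at x)"
  unfolding joukowski_skew_def[abs_def]
  by (auto intro!: derivative_eq_intros simp: joukowski_def field_simps power2_eq_square)

lemma joukowski_skew_squared:
  "(x::'a::field_char_0) \<noteq> 0 \<Longrightarrow> joukowski_skew x ^ 2 = joukowski x * (joukowski x - 1)"
  by (simp add: joukowski_def joukowski_skew_def field_simps power2_eq_square)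

lemma DERIV_poly_joukowski:
  "(x::real) \<noteq> 0 \<Longrightarrow> ((\<lambda>y. poly p (joukowski y)) has_real_derivative
     joukowski_skew x / x * poly (pderiv p) (joukowski x)) (at x)"
  using DERIV_chain2[OF poly_DERIV DERIV_joukowski] by (simp add: mult.commute)

(* The k-th summand is 4^m z^m w(z)^k, cleared of denominators by 4 z w(z) = (z + 1)^2. *)
definition joukowski_pullback :: "nat \<Rightarrow> real poly \<Rightarrow> real poly" where
  "joukowski_pullback m p =
     (\<Sum>k\<le>m. smult (coeff p k * 4 ^ (m - k)) ([:0, 1:] ^ (m - k) * [:1, 1:] ^ (2 * k)))"

lemma degree_joukowski_pullback: "degree (joukowski_pullback m p) \<le> 2 * m"
  unfolding joukowski_pullback_def
proof (intro degree_sum_le order.trans[OF degree_smult_le])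
  fix k assume "k \<in> {..m}"
  then show "degree ([:0, 1::real:] ^ (m - k) * [:1, 1:] ^ (2 * k)) \<le> 2 * m"
    by (intro order.trans[OF degree_mult_le] order.trans[OF add_mono[OF degree_power_le degree_power_le]]) auto
qed simp

lemma poly_joukowski_pullback_of_real:
  fixes z :: "'a::real_field"
  assumes "degree p \<le> m" "z \<noteq> 0"
  shows "poly (map_poly of_real (joukowski_pullback m p)) z
       = 4 ^ m * z ^ m * poly (map_poly of_real p) (joukowski z)"
proof -
  have powers: "4 ^ m * z ^ m * joukowski z ^ k = 4 ^ (m - k) * z ^ (m - k) * (z + 1) ^ (2 * k)"
    if "k \<le> m" for k
  proof -
    obtain j where j: "m = k + j"
      using \<open>k \<le> m\<close> le_Suc_ex by blast
    have "(4::'a) ^ m * z ^ m * joukowski z ^ k = 4 ^ (m - k) * z ^ (m - k) * (4 * z * joukowski z) ^ k"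
      unfolding j by (simp add: power_mult_distrib power_add mult_ac)
    also have "4 * z * joukowski z = (z + 1) ^ 2"
      using assms(2) by (simp add: joukowski_def field_simps power2_eq_square)
    finally show ?thesis
      by (simp add: power_mult)
  qed
  have "poly (map_poly of_real (joukowski_pullback m p)) z
      = (\<Sum>k\<le>m. of_real (coeff p k) * (4 ^ (m - k) * z ^ (m - k) * (z + 1) ^ (2 * k)))"
    by (simp add: joukowski_pullback_def map_poly_of_real_sum map_poly_smult map_poly_of_real_mult
        map_poly_of_real_power poly_sum map_poly_pCons mult_ac add.commute)
  also have "\<dots> = (\<Sum>k\<le>m. of_real (coeff p k) * (4 ^ m * z ^ m * joukowski z ^ k))"
    by (simp add: powers)
  also have "\<dots> = 4 ^ m * z ^ m * poly (map_poly of_real p) (joukowski z)"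
    using poly_eq_sum_coeff[OF order.trans[OF map_poly_degree_leq assms(1)],
        of "of_real :: real \<Rightarrow> 'a" "joukowski z"]
    by (simp add: coeff_map_poly sum_distrib_left mult_ac)
  finally show ?thesis .
qed

lemma poly_joukowski_pullback:
  assumes "degree p \<le> m" "(x::real) \<noteq> 0"
  shows "poly (joukowski_pullback m p) x = 4 ^ m * x ^ m * poly p (joukowski x)"
  using poly_joukowski_pullback_of_real[OF assms] by simp

lemma unitary_heat_op_joukowski_pullback:
  assumes "degree p \<le> m" "(x::real) > 0"
  shows "poly (unitary_heat_op m (joukowski_pullback m p)) x
       = 4 ^ m * x ^ m * jacobi_op (-1/2) (-1/2) m p (joukowski x)"
proof -
  define w u where "w = (joukowski :: real \<Rightarrow> real)" and "u = (joukowski_skew :: real \<Rightarrow> real)"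
  define p' p'' where "p' = pderiv p" and "p'' = pderiv (pderiv p)"
  define h where "h y = m * poly p (w y) + u y * poly p' (w y)" for y
  have euler1: "poly (euler_op (joukowski_pullback m p)) y = 4 ^ m * y ^ m * h y" if "y > 0" for y
  proof -
    have "poly (euler_op (joukowski_pullback m p)) y
        = 4 ^ m * y ^ m * (m * poly p (w y) + y * (u y / y * poly p' (w y)))"
      using that poly_joukowski_pullback[OF assms(1)] DERIV_poly_joukowski[of y p]
      by (intro poly_euler_op_power_mult[of "{0<..}"]) (auto simp: w_def u_def p'_def)
    with that show ?thesis
      by (simp add: h_def)
  qed
  have "(h has_real_derivative
      (m * u x * poly p' (w x) + (w x - 1/2) * poly p' (w x) + u x ^ 2 * poly p'' (w x)) / x) (at x)"
    unfolding h_def[abs_def] w_def u_def p'_def p''_def using assms(2)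
    by (auto intro!: derivative_eq_intros DERIV_joukowski DERIV_joukowski_skew
        simp: field_simps power2_eq_square)
  then have "poly (euler_op (euler_op (joukowski_pullback m p))) x
      = 4 ^ m * x ^ m * (m * h x + x * ((m * u x * poly p' (w x) + (w x - 1/2) * poly p' (w x)
          + u x ^ 2 * poly p'' (w x)) / x))"
    using euler1 assms(2) by (intro poly_euler_op_power_mult[of "{0<..}"]) auto
  then have euler2: "poly (euler_op (euler_op (joukowski_pullback m p))) x
      = 4 ^ m * x ^ m * (m * h x + m * u x * poly p' (w x) + (w x - 1/2) * poly p' (w x)
          + u x ^ 2 * poly p'' (w x))"
    using assms(2) by simp
  show ?thesis
    using euler1[OF assms(2)] euler2 joukowski_skew_squared[of x] assms(2)
    unfolding unitary_heat_op_def jacobi_op_def h_def w_def u_def p'_def p''_def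
    by (simp add: poly_euler_op algebra_simps)
qed

lemma joukowski_pullback_linear_power: "joukowski_pullback m ([:-1, 1:] ^ m) = [:-1, 1:] ^ (2 * m)"
proof (rule poly_eqI_infinite[of "{0<..}"])
  fix y :: real assume "y \<in> {0<..}"
  then have "poly (joukowski_pullback m ([:-1, 1:] ^ m)) y = (4 * y * (joukowski y - 1)) ^ m"
    by (simp add: poly_joukowski_pullback degree_linear_power power_mult_distrib)
  also have "4 * y * (joukowski y - 1) = (y - 1) ^ 2"
    using \<open>y \<in> {0<..}\<close> by (simp add: joukowski_def field_simps power2_eq_square)
  finally show "poly (joukowski_pullback m ([:-1, 1:] ^ m)) y = poly ([:-1, 1:] ^ (2 * m)) y"
    by (simp add: power_mult)
qed (rule infinite_Ioi)

lemma jacobi_char_poly_pullback_heat_equation: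
  assumes chi: "is_jacobi_char_poly (-1/2) (-1/2) m p0 chi" and s: "s \<ge> 0" and y: "y > 0"
  shows "((\<lambda>\<tau>. poly (joukowski_pullback m (chi \<tau>)) y) has_real_derivative
           - poly (unitary_heat_op m (joukowski_pullback m (chi s))) y) (at s within {0..})"
proof -
  from chi have deg: "\<And>t. t \<ge> 0 \<Longrightarrow> degree (chi t) \<le> m"
    and chi_deriv: "\<And>x. ((\<lambda>\<tau>. poly (chi \<tau>) x) has_real_derivative
        - jacobi_op (-1/2) (-1/2) m (chi s) x) (at s within {0..})"
    using s unfolding is_jacobi_char_poly_def by auto
  have deriv: "((\<lambda>\<tau>. 4 ^ m * y ^ m * poly (chi \<tau>) (joukowski y)) has_real_derivative
      - poly (unitary_heat_op m (joukowski_pullback m (chi s))) y) (at s within {0..})"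
    using DERIV_cmult[OF chi_deriv[of "joukowski y"], of "4 ^ m * y ^ m"]
      unitary_heat_op_joukowski_pullback[OF deg[OF s] y] by simp
  have pullback: "4 ^ m * y ^ m * poly (chi \<tau>) (joukowski y) = poly (joukowski_pullback m (chi \<tau>)) y"
    if "\<tau> \<ge> 0" for \<tau>
    using poly_joukowski_pullback[OF deg[OF that], of y] y by simp
  from deriv show ?thesis
    by (rule has_field_derivative_transform_within[where d = 1]) (simp_all add: s pullback)
qed

lemma coeff_joukowski_pullback_jacobi_char_poly:
  assumes chi: "is_jacobi_char_poly (-1/2) (-1/2) m p0 chi" and "t \<ge> 0"
  shows "coeff (joukowski_pullback m (chi t)) k
       = coeff (joukowski_pullback m p0) k * exp (- (k * (2 * real m - k)) * t)"
proof -
  define Q where "Q \<tau> = joukowski_pullback m (chi \<tau>)" for \<tau>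
  \<comment> \<open>Interpolation nodes must be positive: the heat equation is only known for \<open>y > 0\<close>.\<close>
  define A where "A = real ` {1..Suc (2 * m)}"
  have card_A: "card A = Suc (2 * m)"
    unfolding A_def by (simp add: card_image)
  have "((\<lambda>\<tau>. coeff (Q \<tau>) k) has_real_derivative - (k * (2 * real m - k)) * coeff (Q s) k)
      (at s within {0..})" if "s \<ge> 0" for s
  proof -
    have "((\<lambda>\<tau>. coeff (Q \<tau>) k) has_real_derivative coeff (- unitary_heat_op m (Q s)) k)
        (at s within {0..})"
    proof (rule DERIV_coeff_of_DERIV_poly[of A])
      show "degree (- unitary_heat_op m (Q s)) < card A"
        using order.trans[OF degree_unitary_heat_op degree_joukowski_pullback, of m m "chi s"] card_A
        by (simp add: Q_def)
      show "degree (Q \<tau>) < card A" for \<tau>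
        using degree_joukowski_pullback card_A by (simp add: Q_def less_Suc_eq_le)
      show "((\<lambda>\<tau>. poly (Q \<tau>) x) has_real_derivative poly (- unitary_heat_op m (Q s)) x)
          (at s within {0..})" if "x \<in> A" for x
        using jacobi_char_poly_pullback_heat_equation[OF chi \<open>s \<ge> 0\<close>] that by (auto simp: A_def Q_def)
    qed (use that in \<open>simp_all add: A_def\<close>)
    then show ?thesis
      by (simp add: coeff_unitary_heat_op)
  qed
  then have "coeff (Q t) k = coeff (Q 0) k * exp (- (k * (2 * real m - k)) * t)"
    using linear_ode_solution_eq_exp[of "\<lambda>\<tau>. coeff (Q \<tau>) k", OF _ \<open>t \<ge> 0\<close>] by blast
  then show ?thesis
    using chi by (simp add: Q_def is_jacobi_char_poly_def)
qed

lemma hermite_unitary_eq_sum: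
  "hermite_unitary d z t
     = (\<Sum>a\<le>d. of_real ((d choose a) * (-1) ^ (d - a) * exp (- (a * (real d - a)) * (t / 2))) * z ^ a)"
  unfolding hermite_unitary_def
proof (subst sum.atLeastAtMost_rev, simp only: add_0_right atLeast0AtMost, intro sum.cong refl)
  fix a assume "a \<in> {..d}"
  then have "a \<le> d" by simp
  then have "- t * real ((d - a) * (d - (d - a))) / 2 = - (a * (real d - a)) * (t / 2)"
    and "d choose (d - a) = d choose a" and "d - (d - a) = a"
    by (simp_all add: binomial_symmetric[symmetric] of_nat_diff)
  then show "z ^ (d - (d - a)) * (- 1) ^ (d - a) * of_nat (d choose (d - a))
      * complex_of_real (exp (- t * real ((d - a) * (d - (d - a))) / 2))
    = complex_of_real ((d choose a) * (- 1) ^ (d - a) * exp (- (a * (real d - a)) * (t / 2))) * z ^ a"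
    by (simp only:) (simp add: mult_ac)
qed

theorem mainTheorem6:
  fixes m :: nat and chi :: "real \<Rightarrow> real poly" and t :: real and z :: complex
  assumes "is_jacobi_char_poly (-1/2) (-1/2) m ([:-1, 1:] ^ m) chi"
    and "t \<ge> 0" and "z \<noteq> 0"
  shows "hermite_unitary (2 * m) z (2 * t)
         = 4 ^ m * z ^ m * poly (map_poly complex_of_real (chi t)) ((z + inverse z + 2) / 4)"
proof -
  have "degree (chi t) \<le> m"
    using assms(1,2) unfolding is_jacobi_char_poly_def by auto
  then have "4 ^ m * z ^ m * poly (map_poly complex_of_real (chi t)) ((z + inverse z + 2) / 4)
      = poly (map_poly of_real (joukowski_pullback m (chi t))) z"
    using poly_joukowski_pullback_of_real[OF _ assms(3)] by (simp add: joukowski_def)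
  also have "\<dots> = (\<Sum>a\<le>2 * m. of_real (coeff (joukowski_pullback m (chi t)) a) * z ^ a)"
    by (subst poly_eq_sum_coeff[OF order.trans[OF map_poly_degree_leq degree_joukowski_pullback]])
       (simp add: coeff_map_poly)
  also have "\<dots> = (\<Sum>a\<le>2 * m. of_real ((2 * m choose a) * (-1) ^ (2 * m - a)
      * exp (- (a * (real (2 * m) - a)) * (2 * t / 2))) * z ^ a)"
    by (intro sum.cong refl) (simp add: coeff_joukowski_pullback_jacobi_char_poly[OF assms(1,2)]
        joukowski_pullback_linear_power coeff_linear_poly_power)
  also have "\<dots> = hermite_unitary (2 * m) z (2 * t)"
    by (rule hermite_unitary_eq_sum[symmetric])
  finally show ?thesis ..
qed

end
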